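(* Let $k\geq 2$ be an integer and let $G$ be an $(\infty,k)$-path forcer with tip vertex $w$. Then $G$ has an $(\infty,k)$-bounded linear forest decomposition, and every $(\infty,k)$-bounded linear forest decomposition $(F_\infty,F_k)$ of $G$ satisfies $d_{F_\infty}(w)=0$ and $w$ is the last vertex of a path of length $k-1$ in $F_k$ (namely, all edges of the path $P$ belong to $F_k$).
   Context: All graphs are loopless but may have parallel edges. A linear forest is a graph each of whose components is a path; it is $k$-bounded if each component has at most $k$ edges, and $\infty$-bounded means any linear forest. An $(\infty,k)$-bounded linear forest decomposition of $G$ is a pair $(F_\infty,F_k)$ of spanning subgraphs whose edge sets partition $E(G)$, with $F_\infty$ a linear forest and $F_k$ a $k$-bounded linear forest. For integers $K>L\geq 2$, a short $(K,L)$-forcer is obtained from a path $v_0v_1\dots v_K$ by doubling every edge $v_iv_{i+1}$, $0\le i\le K-1$, except those with $i = K-1-\mu(L+1)$ for some integer $\mu\in\{0,\ldots,\lfloor (K-1)/(L+1)\rfloor\}$; $v_K$ is its tip vertex. An $(\infty,k)$-path forcer is obtained from a path $P=p_0p_1\dots p_{k-1}$ of length $k-1$ by identifying each of the vertices $p_0,\dots,p_{k-2}$ with the tip vertices of two new disjoint short $(k+1,k)$-forcers; its tip vertex is $w=p_{k-1}$, the unique vertex of degree $1$. *)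

theory Defs
  imports Main
begin

text \<open>A (loopless, possibly multi-) graph is given by a vertex set V, an edge set E
(edge identifiers, so parallel edges are distinct identifiers) and an endpoint map
ends, with ends e a two-element subset of V.  A spanning subgraph is given by a
subset F of E.\<close>

definition adj_in :: "('e \<Rightarrow> 'v set) \<Rightarrow> 'e set \<Rightarrow> 'v \<Rightarrow> 'v \<Rightarrow> bool" where
  "adj_in ends F u v \<longleftrightarrow> (\<exists>e\<in>F. ends e = {u, v})"

definition comp_in :: "('e \<Rightarrow> 'v set) \<Rightarrow> 'e set \<Rightarrow> 'v \<Rightarrow> 'v set" where
  "comp_in ends F v = {u. (adj_in ends F)\<^sup>*\<^sup>* v u}"

definition is_path_on :: "('e \<Rightarrow> 'v set) \<Rightarrow> 'e set \<Rightarrow> 'v set \<Rightarrow> 'v list \<Rightarrow> 'e list \<Rightarrow> bool" where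
  "is_path_on ends F C vs es \<longleftrightarrow>
     set vs = C \<and> distinct vs \<and> distinct es \<and>
     set es = {e \<in> F. ends e \<subseteq> C} \<and>
     length vs = Suc (length es) \<and>
     (\<forall>i < length es. ends (es ! i) = {vs ! i, vs ! Suc i})"

definition linear_forest :: "'v set \<Rightarrow> 'e set \<Rightarrow> ('e \<Rightarrow> 'v set) \<Rightarrow> 'e set \<Rightarrow> bool" where
  "linear_forest V E ends F \<longleftrightarrow> F \<subseteq> E \<and>
     (\<forall>v\<in>V. \<exists>vs es. is_path_on ends F (comp_in ends F v) vs es)"

definition bounded_linear_forest :: "nat \<Rightarrow> 'v set \<Rightarrow> 'e set \<Rightarrow> ('e \<Rightarrow> 'v set) \<Rightarrow> 'e set \<Rightarrow> bool" where
  "bounded_linear_forest k V E ends F \<longleftrightarrow> F \<subseteq> E \<and>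
     (\<forall>v\<in>V. \<exists>vs es. is_path_on ends F (comp_in ends F v) vs es \<and> length es \<le> k)"

definition inf_k_decomp :: "nat \<Rightarrow> 'v set \<Rightarrow> 'e set \<Rightarrow> ('e \<Rightarrow> 'v set) \<Rightarrow> 'e set \<Rightarrow> 'e set \<Rightarrow> bool" where
  "inf_k_decomp k V E ends Finf Fk \<longleftrightarrow>
     Finf \<union> Fk = E \<and> Finf \<inter> Fk = {} \<and>
     linear_forest V E ends Finf \<and> bounded_linear_forest k V E ends Fk"

definition degree_in :: "('e \<Rightarrow> 'v set) \<Rightarrow> 'e set \<Rightarrow> 'v \<Rightarrow> nat" where
  "degree_in ends F v = card {e \<in> F. v \<in> ends e}"

text \<open>In a short (K,L)-forcer the edge v_i v_(i+1) (i < K) is single (not doubled)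
iff i = K-1-mu(L+1) for some mu in {0..(K-1) div (L+1)}.\<close>
definition sf_single :: "nat \<Rightarrow> nat \<Rightarrow> nat \<Rightarrow> bool" where
  "sf_single K L i \<longleftrightarrow> (\<exists>\<mu>\<le>(K - 1) div (L + 1). i = K - 1 - \<mu> * (L + 1))"

text \<open>PV j is p_j (j<k).  For j < k-1 and
c :: bool (which of the two copies), FV j c i is vertex v_i (i < k+1) of a short
(k+1,k)-forcer whose tip v_(k+1) is identified with PV j.\<close>
datatype pf_vert = PV nat | FV nat bool nat

text \<open>PE j is the edge p_j p_(j+1); FE j c i m is copy m of edge v_i v_(i+1) of the
forcer (j,c); copy True exists only for doubled edges.\<close>
datatype pf_edge = PE nat | FE nat bool nat bool

definition pf_fvert :: "nat \<Rightarrow> nat \<Rightarrow> bool \<Rightarrow> nat \<Rightarrow> pf_vert" where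
  "pf_fvert k j c i = (if i = k + 1 then PV j else FV j c i)"

definition pf_V :: "nat \<Rightarrow> pf_vert set" where
  "pf_V k = {PV j | j. j < k} \<union> {FV j c i | j c i. j < k - 1 \<and> i < k + 1}"

definition pf_E :: "nat \<Rightarrow> pf_edge set" where
  "pf_E k = {PE j | j. j < k - 1} \<union>
     {FE j c i m | j c i m. j < k - 1 \<and> i < k + 1 \<and> (m \<longrightarrow> \<not> sf_single (k + 1) k i)}"

fun pf_ends :: "nat \<Rightarrow> pf_edge \<Rightarrow> pf_vert set" where
  "pf_ends k (PE j) = {PV j, PV (Suc j)}"
| "pf_ends k (FE j c i m) = {pf_fvert k j c i, pf_fvert k j c (Suc i)}"

definition pf_tip :: "nat \<Rightarrow> pf_vert" where
  "pf_tip k = PV (k - 1)"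

end

theory Submission
  imports Defs
begin

text \<open>Both copies of a doubled edge cannot lie in the linear forest \<open>F\<^sub>\<infinity>\<close>, so every doubled
edge of a short \<open>(k+1,k)\<close>-forcer contributes a copy to \<open>F\<^sub>k\<close>.  Its \<open>k\<close> doubled edges
form a path of length \<open>k\<close> ending at the tip, so the single tip edge must go to \<open>F\<^sub>\<infinity>\<close>.
Each \<open>p\<^sub>j\<close>, \<open>j < k - 1\<close>, is the tip of two forcers and thus already has \<open>F\<^sub>\<infinity>\<close>-degree 2; hence
\<open>p\<^sub>jp\<^sub>j\<^sub>+\<^sub>1 \<in> F\<^sub>k\<close>, and \<open>w = p\<^sub>k\<^sub>-\<^sub>1\<close>, incident only to \<open>p\<^sub>k\<^sub>-\<^sub>2p\<^sub>k\<^sub>-\<^sub>1\<close>, is isolated in \<open>F\<^sub>\<infinity>\<close>.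
Conversely, taking \<open>P\<close> and the second copies of doubled edges as \<open>F\<^sub>k\<close> and the first
copies as \<open>F\<^sub>\<infinity>\<close> gives a decomposition.\<close>

section \<open>Paths, components and linear forests\<close>

lemma symp_adj_in: "symp (adj_in ends F)"
  unfolding symp_def adj_in_def by (metis insert_commute)

lemma comp_in_refl: "v \<in> comp_in ends F v"
  by (simp add: comp_in_def)

lemma comp_in_edge:
  "e \<in> F \<Longrightarrow> ends e = {a, b} \<Longrightarrow> a \<in> comp_in ends F v \<Longrightarrow> b \<in> comp_in ends F v"
  unfolding comp_in_def adj_in_def by (auto intro: rtranclp.rtrancl_into_rtrancl)

lemma comp_in_subset:
  assumes closed: "\<forall>e\<in>F. ends e \<inter> S \<noteq> {} \<longrightarrow> ends e \<subseteq> S" and "v \<in> S"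
  shows "comp_in ends F v \<subseteq> S"
proof
  fix u assume "u \<in> comp_in ends F v"
  then have "(adj_in ends F)\<^sup>*\<^sup>* v u" by (simp add: comp_in_def)
  then show "u \<in> S"
    by induction (use \<open>v \<in> S\<close> closed in \<open>auto simp: adj_in_def\<close>)
qed

lemma walk_reachable:
  assumes "length vs = Suc (length es)" and "\<forall>i<length es. ends (es ! i) = {vs ! i, vs ! Suc i}"
    and "set es \<subseteq> F" and "i < length vs"
  shows "(adj_in ends F)\<^sup>*\<^sup>* (vs ! 0) (vs ! i)"
  using \<open>i < length vs\<close>
proof (induction i)
  case (Suc i)
  then have "es ! i \<in> F" "ends (es ! i) = {vs ! i, vs ! Suc i}"
    using assms by auto
  then have step: "adj_in ends F (vs ! i) (vs ! Suc i)"
    unfolding adj_in_def by blast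
  have "(adj_in ends F)\<^sup>*\<^sup>* (vs ! 0) (vs ! i)"
    using Suc.IH Suc.prems by simp
  then show ?case using step by (rule rtranclp.rtrancl_into_rtrancl)
qed (rule rtranclp.rtrancl_refl)

lemma walk_subset_comp_in:
  assumes len: "length vs = Suc (length es)" and cons: "\<forall>i<length es. ends (es ! i) = {vs ! i, vs ! Suc i}"
    and sub: "set es \<subseteq> F" and v: "v \<in> set vs"
  shows "set vs \<subseteq> comp_in ends F v"
proof -
  have reach: "(adj_in ends F)\<^sup>*\<^sup>* (vs ! 0) u" if "u \<in> set vs" for u
    using that[unfolded in_set_conv_nth] walk_reachable[OF len cons sub] by blast
  have "(adj_in ends F)\<^sup>*\<^sup>* v (vs ! 0)"
    using reach[OF v] by (rule sympD[OF symp_rtranclp[OF symp_adj_in]])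
  then show ?thesis
    using reach rtranclp_trans[of "adj_in ends F" v "vs ! 0"] by (auto simp: comp_in_def)
qed

lemma is_path_on_comp_in:
  assumes dv: "distinct vs" and de: "distinct es" and len: "length vs = Suc (length es)"
    and cons: "\<forall>i<length es. ends (es ! i) = {vs ! i, vs ! Suc i}"
    and sub: "set es \<subseteq> F" and closed: "\<forall>e\<in>F. ends e \<inter> set vs \<noteq> {} \<longrightarrow> e \<in> set es"
    and nonempty: "\<forall>e\<in>F. ends e \<noteq> {}" and v: "v \<in> set vs"
  shows "is_path_on ends F (comp_in ends F v) vs es"
proof -
  have ends_sub: "ends e \<subseteq> set vs" if e: "e \<in> set es" for e
  proof -
    obtain i where "i < length es" "es ! i = e"
      using e in_set_conv_nth[of e es] by blast
    with cons len show ?thesis by (auto intro!: nth_mem)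
  qed
  have "\<forall>e\<in>F. ends e \<inter> set vs \<noteq> {} \<longrightarrow> ends e \<subseteq> set vs"
    using closed ends_sub by blast
  then have "comp_in ends F v = set vs"
    using comp_in_subset v walk_subset_comp_in[OF len cons sub v] by (intro equalityI)
  moreover have "set es = {e \<in> F. ends e \<subseteq> set vs}"
  proof (intro equalityI subsetI)
    fix e assume "e \<in> {e \<in> F. ends e \<subseteq> set vs}"
    with nonempty closed show "e \<in> set es" by blast
  qed (use sub ends_sub in blast)
  ultimately show ?thesis
    unfolding is_path_on_def using dv de len cons by simp
qed

lemma is_path_on_edge_index:
  assumes P: "is_path_on ends F C vs es" and e: "e \<in> F" "ends e \<subseteq> C" "vs ! p \<in> ends e"
    and p: "p < length vs"
  shows "\<exists>i<length es. es ! i = e \<and> (i = p \<or> Suc i = p)"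
proof -
  have "e \<in> set es" using P e by (auto simp: is_path_on_def)
  then obtain i where i: "i < length es" "es ! i = e"
    using in_set_conv_nth[of e es] by blast
  with P e have "vs ! p \<in> {vs ! i, vs ! Suc i}"
    by (auto simp: is_path_on_def)
  moreover have "distinct vs" "Suc i < length vs"
    using P i by (auto simp: is_path_on_def)
  ultimately have "i = p \<or> Suc i = p"
    using p by (auto simp: nth_eq_iff_index_eq)
  with i show ?thesis by blast
qed

lemma linear_forest_no_three_edges_at:
  assumes lf: "linear_forest V E ends F" and v: "v \<in> V"
    and F: "a \<in> F" "b \<in> F" "c \<in> F" and distinct: "a \<noteq> b" "a \<noteq> c" "b \<noteq> c"
    and ends: "ends a = {v, x}" "ends b = {v, y}" "ends c = {v, z}"
  shows False
proof -
  obtain vs es where P: "is_path_on ends F (comp_in ends F v) vs es"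
    using lf v by (auto simp: linear_forest_def)
  have "v \<in> set vs" using P comp_in_refl[of v ends F] by (simp add: is_path_on_def)
  then obtain p where p: "p < length vs" "vs ! p = v"
    using in_set_conv_nth[of v vs] by blast
  have index: "\<exists>i. es ! i = d \<and> (i = p \<or> Suc i = p)" if "d \<in> F" "ends d = {v, u}" for d u
    using is_path_on_edge_index[OF P that(1) _ _ p(1)] that p(2)
      comp_in_edge[OF that comp_in_refl[of v ends F]] comp_in_refl[of v ends F] by auto
  from index[OF F(1) ends(1)] index[OF F(2) ends(2)] index[OF F(3) ends(3)] distinct
  show False by (metis Suc_inject)
qed

lemma linear_forest_no_parallel_edges:
  assumes lf: "linear_forest V E ends F" and u: "u \<in> V" and "u \<noteq> w"
    and F: "a \<in> F" "b \<in> F" and "a \<noteq> b" and ends: "ends a = {u, w}" "ends b = {u, w}"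
  shows False
proof -
  obtain vs es where P: "is_path_on ends F (comp_in ends F u) vs es"
    using lf u by (auto simp: linear_forest_def)
  have w: "w \<in> comp_in ends F u"
    using comp_in_edge[OF F(1) ends(1) comp_in_refl[of u ends F]] .
  have "u \<in> set vs" "w \<in> set vs"
    using P comp_in_refl[of u ends F] w by (simp_all add: is_path_on_def)
  then obtain p q where p: "p < length vs" "vs ! p = u" and q: "q < length vs" "vs ! q = w"
    using in_set_conv_nth[of _ vs] by metis
  have "p \<noteq> q" using p q \<open>u \<noteq> w\<close> by auto
  have index: "\<exists>i. es ! i = d \<and> (i = p \<or> Suc i = p) \<and> (i = q \<or> Suc i = q)"
    if d: "d \<in> F" "ends d = {u, w}" for d
  proof -
    have sub: "ends d \<subseteq> comp_in ends F u" using d w comp_in_refl by auto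
    obtain i where i: "i < length es" "es ! i = d" "i = p \<or> Suc i = p"
      using is_path_on_edge_index[OF P d(1) sub _ p(1)] d p by auto
    obtain i' where i': "i' < length es" "es ! i' = d" "i' = q \<or> Suc i' = q"
      using is_path_on_edge_index[OF P d(1) sub _ q(1)] d q by auto
    have "i = i'" using i i' P by (auto simp: is_path_on_def nth_eq_iff_index_eq)
    with i i' show ?thesis by blast
  qed
  obtain ia ib where a: "es ! ia = a" "ia = p \<or> Suc ia = p" "ia = q \<or> Suc ia = q"
    and b: "es ! ib = b" "ib = p \<or> Suc ib = p" "ib = q \<or> Suc ib = q"
    using index[OF F(1) ends(1)] index[OF F(2) ends(2)] by blast
  have "ia = ib" using a(2,3) b(2,3) \<open>p \<noteq> q\<close> by linarith
  with a(1) b(1) \<open>a \<noteq> b\<close> show False by simp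
qed

lemma bounded_linear_forest_no_long_trail:
  assumes bf: "bounded_linear_forest k V E ends F" and "x 0 \<in> V"
    and trail: "\<forall>i\<le>k. g i \<in> F \<and> ends (g i) = {x i, x (Suc i)}" and inj: "inj_on g {..k}"
  shows False
proof -
  obtain vs es where P: "is_path_on ends F (comp_in ends F (x 0)) vs es" and "length es \<le> k"
    using bf \<open>x 0 \<in> V\<close> by (auto simp: bounded_linear_forest_def)
  have x: "x i \<in> comp_in ends F (x 0)" if "i \<le> Suc k" for i
    using that
  proof (induction i)
    case (Suc i)
    then show ?case using trail comp_in_edge by (metis Suc_le_mono le_SucI)
  qed (rule comp_in_refl)
  have "g ` {..k} \<subseteq> set es"
    using P trail x by (auto simp: is_path_on_def)
  then have "card (g ` {..k}) \<le> card (set es)"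
    by (rule card_mono[OF finite_set])
  also have "\<dots> \<le> length es"
    by (rule card_length)
  finally show False
    using card_image[OF inj] \<open>length es \<le> k\<close> by simp
qed

lemma sf_single_forcer_iff: "sf_single (k + 1) k i \<longleftrightarrow> i = k"
  unfolding sf_single_def by auto

lemma mem_pf_V_iff:
  "v \<in> pf_V k \<longleftrightarrow> (\<exists>j. v = PV j \<and> j < k) \<or> (\<exists>j c i. v = FV j c i \<and> j < k - 1 \<and> i < k + 1)"
  unfolding pf_V_def by auto

lemma mem_pf_E_iff:
  "e \<in> pf_E k \<longleftrightarrow> (\<exists>j. e = PE j \<and> j < k - 1) \<or>
     (\<exists>j c i m. e = FE j c i m \<and> j < k - 1 \<and> i < k + 1 \<and> (m \<longrightarrow> i \<noteq> k))"
  unfolding pf_E_def using sf_single_forcer_iff by auto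

lemma PE_mem_pf_E [simp]: "PE j \<in> pf_E k \<longleftrightarrow> j < k - 1"
  and FE_mem_pf_E [simp]: "FE j c i m \<in> pf_E k \<longleftrightarrow> j < k - 1 \<and> i < k + 1 \<and> (m \<longrightarrow> i \<noteq> k)"
  by (simp_all add: mem_pf_E_iff)

lemma pf_ends_nonempty: "pf_ends k e \<noteq> {}"
  by (cases e) auto

section \<open>Every decomposition is forced\<close>

context
  fixes k :: nat and Finf Fk :: "pf_edge set"
  assumes decomp: "inf_k_decomp k (pf_V k) (pf_E k) (pf_ends k) Finf Fk"
begin

lemma linear_forest_Finf: "linear_forest (pf_V k) (pf_E k) (pf_ends k) Finf"
  and bounded_linear_forest_Fk: "bounded_linear_forest k (pf_V k) (pf_E k) (pf_ends k) Fk"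
  and Finf_Un_Fk: "Finf \<union> Fk = pf_E k"
  using decomp by (simp_all add: inf_k_decomp_def)

lemma mem_Finf_iff: "e \<in> pf_E k \<Longrightarrow> e \<in> Finf \<longleftrightarrow> e \<notin> Fk"
  using decomp by (auto simp: inf_k_decomp_def)

lemma doubled_edge_copy_in_Fk:
  assumes "j < k - 1" "i < k"
  shows "FE j c i False \<in> Fk \<or> FE j c i True \<in> Fk"
proof (rule ccontr)
  assume "\<not> ?thesis"
  then have "FE j c i False \<in> Finf" "FE j c i True \<in> Finf"
    using assms mem_Finf_iff[of "FE j c i _"] by simp_all
  moreover have "FV j c i \<in> pf_V k"
    using assms by (auto simp: mem_pf_V_iff)
  ultimately show False
    using linear_forest_no_parallel_edges[OF linear_forest_Finf, of "FV j c i" "FV j c (Suc i)"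
        "FE j c i False" "FE j c i True"] assms
    by (auto simp: pf_fvert_def)
qed

lemma forcer_tip_edge_in_Finf:
  assumes j: "j < k - 1"
  shows "FE j c k False \<in> Finf"
proof (rule ccontr)
  assume "FE j c k False \<notin> Finf"
  then have tip_edge: "FE j c k False \<in> Fk"
    using j mem_Finf_iff[of "FE j c k False"] by simp
  define g where
    "g i = (if i = k \<or> FE j c i True \<notin> Fk then FE j c i False else FE j c i True)" for i
  have "g i \<in> Fk \<and> pf_ends k (g i) = {pf_fvert k j c i, pf_fvert k j c (Suc i)}" if "i \<le> k" for i
  proof (cases "i = k")
    case False
    with that doubled_edge_copy_in_Fk[OF j, of i c] show ?thesis by (auto simp: g_def)
  qed (simp add: g_def tip_edge)
  moreover have "inj_on g {..k}"
    unfolding inj_on_def g_def by auto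
  moreover have "pf_fvert k j c 0 \<in> pf_V k"
    using j by (auto simp: pf_fvert_def mem_pf_V_iff)
  ultimately show False
    using bounded_linear_forest_no_long_trail[OF bounded_linear_forest_Fk] by blast
qed

lemma path_edge_in_Fk:
  assumes j: "j < k - 1"
  shows "PE j \<in> Fk"
proof (rule ccontr)
  assume "PE j \<notin> Fk"
  then have "PE j \<in> Finf"
    using j mem_Finf_iff[of "PE j"] by simp
  moreover have "PV j \<in> pf_V k"
    using j by (auto simp: mem_pf_V_iff)
  ultimately show False
    using linear_forest_no_three_edges_at[OF linear_forest_Finf, of "PV j"
        "FE j False k False" "FE j True k False" "PE j"] forcer_tip_edge_in_Finf[OF j]
    by (auto simp: pf_fvert_def)
qed

lemma degree_in_Finf_pf_tip: "degree_in (pf_ends k) Finf (pf_tip k) = 0"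
proof -
  have "e \<notin> Finf" if "e \<in> pf_E k" "pf_tip k \<in> pf_ends k e" for e
  proof -
    from that obtain j where "e = PE j" "j < k - 1"
      by (auto simp: mem_pf_E_iff pf_tip_def pf_fvert_def split: if_splits)
    then show ?thesis
      using path_edge_in_Fk mem_Finf_iff by simp
  qed
  then have "{e \<in> Finf. pf_tip k \<in> pf_ends k e} = {}"
    using Finf_Un_Fk by blast
  then show ?thesis
    unfolding degree_in_def by (simp only: card.empty)
qed

end

section \<open>A decomposition exists\<close>

definition pf_Fk :: "nat \<Rightarrow> pf_edge set" where
  "pf_Fk k = {PE j | j. j < k - 1} \<union> {FE j c i True | j c i. j < k - 1 \<and> i < k}"

definition pf_Finf :: "nat \<Rightarrow> pf_edge set" where
  "pf_Finf k = {FE j c i False | j c i. j < k - 1 \<and> i \<le> k}"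

text \<open>The component of \<open>pf_Finf k\<close> through \<open>p\<^sub>j\<close> runs along the first copies from \<open>v\<^sub>0\<close> to the tip
in forcer \<open>(j, False)\<close> and back to \<open>v\<^sub>0\<close> in forcer \<open>(j, True)\<close>.\<close>

definition Finf_path_vert :: "nat \<Rightarrow> nat \<Rightarrow> nat \<Rightarrow> pf_vert" where
  "Finf_path_vert k j n =
     (if n \<le> k then FV j False n else if n = k + 1 then PV j else FV j True (2 * k + 2 - n))"

definition Finf_path_edge :: "nat \<Rightarrow> nat \<Rightarrow> nat \<Rightarrow> pf_edge" where
  "Finf_path_edge k j n = (if n \<le> k then FE j False n False else FE j True (2 * k + 1 - n) False)"

lemma pf_E_eq_Finf_Un_Fk: "pf_E k = pf_Finf k \<union> pf_Fk k"
proof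
  show "pf_E k \<subseteq> pf_Finf k \<union> pf_Fk k"
  proof
    fix e assume "e \<in> pf_E k"
    then consider j where "e = PE j" "j < k - 1"
      | j c i m where "e = FE j c i m" "j < k - 1" "i < k + 1" "m \<longrightarrow> i \<noteq> k"
      unfolding mem_pf_E_iff by blast
    then show "e \<in> pf_Finf k \<union> pf_Fk k"
      by cases (auto simp: pf_Fk_def pf_Finf_def)
  qed
qed (auto simp: pf_Finf_def pf_Fk_def mem_pf_E_iff)

lemma set_Finf_path_vert:
  "Finf_path_vert k j ` {0..<2 * k + 3} = {PV j} \<union> {FV j c i | c i. i \<le> k}"
proof
  show "{PV j} \<union> {FV j c i | c i. i \<le> k} \<subseteq> Finf_path_vert k j ` {0..<2 * k + 3}"
  proof
    fix v assume "v \<in> {PV j} \<union> {FV j c i | c i. i \<le> k}"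
    then consider "v = PV j" | i where "v = FV j False i" "i \<le> k"
      | i where "v = FV j True i" "i \<le> k"
      by blast
    then show "v \<in> Finf_path_vert k j ` {0..<2 * k + 3}"
    proof cases
      case 1 then show ?thesis by (intro image_eqI[of _ _ "k + 1"]) (auto simp: Finf_path_vert_def)
    next
      case 2 then show ?thesis by (intro image_eqI[of _ _ i]) (auto simp: Finf_path_vert_def)
    next
      case 3 then show ?thesis by (intro image_eqI[of _ _ "2 * k + 2 - i"]) (auto simp: Finf_path_vert_def)
    qed
  qed
qed (auto simp: Finf_path_vert_def)

lemma pf_ends_Finf_path_edge:
  assumes "n < 2 * k + 2"
  shows "pf_ends k (Finf_path_edge k j n) = {Finf_path_vert k j n, Finf_path_vert k j (Suc n)}"
proof (cases "n \<le> k + 1")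
  case False
  then have "2 * k + 2 - n = Suc (2 * k + 1 - n)" "2 * k + 1 - n < k"
    using assms by auto
  with False show ?thesis
    by (simp add: Finf_path_edge_def Finf_path_vert_def pf_fvert_def insert_commute)
qed (auto simp: Finf_path_edge_def Finf_path_vert_def pf_fvert_def insert_commute)

lemma Finf_component_at_forcers:
  assumes j: "j < k - 1" and v: "v \<in> Finf_path_vert k j ` {0..<2 * k + 3}"
  shows "is_path_on (pf_ends k) (pf_Finf k) (comp_in (pf_ends k) (pf_Finf k) v)
           (map (Finf_path_vert k j) [0..<2 * k + 3]) (map (Finf_path_edge k j) [0..<2 * k + 2])"
proof (rule is_path_on_comp_in)
  show "distinct (map (Finf_path_vert k j) [0..<2 * k + 3])"
    by (auto simp: distinct_map inj_on_def Finf_path_vert_def split: if_splits)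
  show "distinct (map (Finf_path_edge k j) [0..<2 * k + 2])"
    by (auto simp: distinct_map inj_on_def Finf_path_edge_def split: if_splits)
  show "\<forall>i<length (map (Finf_path_edge k j) [0..<2 * k + 2]).
          pf_ends k (map (Finf_path_edge k j) [0..<2 * k + 2] ! i) =
          {map (Finf_path_vert k j) [0..<2 * k + 3] ! i, map (Finf_path_vert k j) [0..<2 * k + 3] ! Suc i}"
    using pf_ends_Finf_path_edge by (simp del: upt_Suc)
  show "\<forall>e\<in>pf_Finf k. pf_ends k e \<inter> set (map (Finf_path_vert k j) [0..<2 * k + 3]) \<noteq> {} \<longrightarrow>
          e \<in> set (map (Finf_path_edge k j) [0..<2 * k + 2])"
  proof (intro ballI impI)
    fix e assume e: "e \<in> pf_Finf k" "pf_ends k e \<inter> set (map (Finf_path_vert k j) [0..<2 * k + 3]) \<noteq> {}"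
    then obtain c i where e_eq: "e = FE j c i False" "i \<le> k"
      unfolding set_map atLeastLessThan_upt[symmetric] set_Finf_path_vert
      by (auto simp: pf_Finf_def pf_fvert_def split: if_splits)
    show "e \<in> set (map (Finf_path_edge k j) [0..<2 * k + 2])"
    proof (cases c)
      case True
      with e_eq show ?thesis
        by (auto intro!: image_eqI[of _ _ "2 * k + 1 - i"] simp: Finf_path_edge_def)
    next
      case False
      with e_eq show ?thesis
        by (auto intro!: image_eqI[of _ _ i] simp: Finf_path_edge_def)
    qed
  qed
qed (use j v pf_ends_nonempty in \<open>auto simp: pf_Finf_def Finf_path_edge_def\<close>)

lemma Finf_component_at_tip:
  "is_path_on (pf_ends k) (pf_Finf k) (comp_in (pf_ends k) (pf_Finf k) (PV (k - 1))) [PV (k - 1)] []"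
  by (rule is_path_on_comp_in)
    (use pf_ends_nonempty in \<open>auto simp: pf_Finf_def pf_fvert_def split: if_splits\<close>)

lemma linear_forest_pf_Finf: "linear_forest (pf_V k) (pf_E k) (pf_ends k) (pf_Finf k)"
  unfolding linear_forest_def
proof (intro conjI ballI)
  show "pf_Finf k \<subseteq> pf_E k"
    using pf_E_eq_Finf_Un_Fk by blast
  fix v assume "v \<in> pf_V k"
  then have "v = PV (k - 1) \<or> (\<exists>j<k - 1. v \<in> Finf_path_vert k j ` {0..<2 * k + 3})"
    unfolding mem_pf_V_iff set_Finf_path_vert by auto
  then show "\<exists>vs es. is_path_on (pf_ends k) (pf_Finf k) (comp_in (pf_ends k) (pf_Finf k) v) vs es"
    using Finf_component_at_forcers Finf_component_at_tip by blast
qed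

lemma Fk_component_at_path:
  assumes "v \<in> set (map PV [0..<k])"
  shows "is_path_on (pf_ends k) (pf_Fk k) (comp_in (pf_ends k) (pf_Fk k) v)
           (map PV [0..<k]) (map PE [0..<k - 1])"
  by (rule is_path_on_comp_in)
    (use assms pf_ends_nonempty in \<open>auto simp: pf_Fk_def pf_fvert_def distinct_map inj_on_def nth_append\<close>)

lemma Fk_component_at_forcer:
  assumes "j < k - 1" and "v \<in> set (map (FV j c) [0..<k + 1])"
  shows "is_path_on (pf_ends k) (pf_Fk k) (comp_in (pf_ends k) (pf_Fk k) v)
           (map (FV j c) [0..<k + 1]) (map (\<lambda>i. FE j c i True) [0..<k])"
  by (rule is_path_on_comp_in)
    (use assms pf_ends_nonempty in
      \<open>auto simp del: upt_Suc simp: pf_Fk_def pf_fvert_def distinct_map inj_on_def\<close>)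

lemma bounded_linear_forest_pf_Fk: "bounded_linear_forest k (pf_V k) (pf_E k) (pf_ends k) (pf_Fk k)"
  unfolding bounded_linear_forest_def
proof (intro conjI ballI)
  show "pf_Fk k \<subseteq> pf_E k"
    using pf_E_eq_Finf_Un_Fk by blast
  fix v assume "v \<in> pf_V k"
  then consider j where "v = PV j" "j < k" | j c i where "v = FV j c i" "j < k - 1" "i < k + 1"
    unfolding mem_pf_V_iff by blast
  then show "\<exists>vs es. is_path_on (pf_ends k) (pf_Fk k) (comp_in (pf_ends k) (pf_Fk k) v) vs es \<and> length es \<le> k"
  proof cases
    case 1 then show ?thesis using Fk_component_at_path[of v k] by force
  next
    case 2 then show ?thesis using Fk_component_at_forcer[of _ k v] by force
  qed
qed

lemma inf_k_decomp_pf_Finf_pf_Fk: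
  "inf_k_decomp k (pf_V k) (pf_E k) (pf_ends k) (pf_Finf k) (pf_Fk k)"
  unfolding inf_k_decomp_def
  using pf_E_eq_Finf_Un_Fk linear_forest_pf_Finf bounded_linear_forest_pf_Fk
  by (auto simp: pf_Finf_def pf_Fk_def)

theorem proposition13:
  fixes k :: nat
  assumes "k \<ge> 2"
  shows "(\<exists>Finf Fk. inf_k_decomp k (pf_V k) (pf_E k) (pf_ends k) Finf Fk) \<and>
         (\<forall>Finf Fk. inf_k_decomp k (pf_V k) (pf_E k) (pf_ends k) Finf Fk \<longrightarrow>
            degree_in (pf_ends k) Finf (pf_tip k) = 0 \<and>
            (\<forall>j < k - 1. PE j \<in> Fk))"
  using inf_k_decomp_pf_Finf_pf_Fk degree_in_Finf_pf_tip path_edge_in_Fk by blast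

end
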